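(* For every $n\ge1$: if $Q_{2n}$ has a source cycle, then $Q_{4n}$ has a source cycle.
   Context: $Q_{2n}$ is realized as $G_{1,n}$: the graph on quaternary strings $q_1\cdots q_n$, $q_i\in\{0,1,2,3\}$, adjacent iff they differ in exactly one position by $\pm1\pmod4$; origin $\mathbf 0$. A permutation $\sigma$ of $\{1,\dots,n\}$ acts by $\sigma(q_1,\dots,q_n)=(q_{\sigma^{-1}(1)},\dots,q_{\sigma^{-1}(n)})$, an automorphism fixing $\mathbf 0$. A directed Hamilton cycle $H$ of $Q_{2n}$ starting at $\mathbf 0$ is a source cycle if there is an $n\times n$ Latin square $M=(m_{ij})$ on $\{1,\dots,n\}$ with first row the identity such that, with $\sigma_i(j)=m_{ij}$, the edge sets of $\sigma_1(H),\dots,\sigma_n(H)$ partition the edge set of $Q_{2n}$. *)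

theory Defs
  imports Main
begin

text \<open>Vertices of G(1,n) (= Q_{2n}): quaternary strings of length n, as lists.\<close>
definition qvert :: "nat \<Rightarrow> nat list set" where
  "qvert n = {q. length q = n \<and> (\<forall>k<n. q ! k < 4)}"

definition qadj :: "nat \<Rightarrow> nat list \<Rightarrow> nat list \<Rightarrow> bool" where
  "qadj n u v \<longleftrightarrow> u \<in> qvert n \<and> v \<in> qvert n \<and>
     card {k. k < n \<and> u ! k \<noteq> v ! k} = 1 \<and>
     (\<forall>k<n. u ! k \<noteq> v ! k \<longrightarrow> ((u ! k + 1) mod 4 = v ! k \<or> (v ! k + 1) mod 4 = u ! k))"

definition qedges :: "nat \<Rightarrow> nat list set set" where
  "qedges n = {{u, v} | u v. qadj n u v}"

definition qorigin :: "nat \<Rightarrow> nat list" where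
  "qorigin n = replicate n 0"

definition dir_ham_cycle :: "nat \<Rightarrow> nat list list \<Rightarrow> bool" where
  "dir_ham_cycle n H \<longleftrightarrow> distinct H \<and> set H = qvert n \<and> H \<noteq> [] \<and> H ! 0 = qorigin n \<and>
     (\<forall>i<length H. qadj n (H ! i) (H ! ((i + 1) mod length H)))"

definition cycle_edges :: "nat list list \<Rightarrow> nat list set set" where
  "cycle_edges H = {{H ! i, H ! ((i + 1) mod length H)} | i. i < length H}"

definition perm_act :: "nat \<Rightarrow> (nat \<Rightarrow> nat) \<Rightarrow> nat list \<Rightarrow> nat list" where
  "perm_act n \<sigma> q = map (\<lambda>k. q ! (inv_into {0..<n} \<sigma> k)) [0..<n]"

definition latin_square_id :: "nat \<Rightarrow> (nat \<Rightarrow> nat \<Rightarrow> nat) \<Rightarrow> bool" where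
  "latin_square_id n M \<longleftrightarrow>
     (\<forall>i<n. bij_betw (\<lambda>j. M i j) {0..<n} {0..<n}) \<and>
     (\<forall>j<n. bij_betw (\<lambda>i. M i j) {0..<n} {0..<n}) \<and>
     (\<forall>j<n. M 0 j = j)"

definition source_cycle :: "nat \<Rightarrow> nat list list \<Rightarrow> bool" where
  "source_cycle n H \<longleftrightarrow> dir_ham_cycle n H \<and>
     (\<exists>M. latin_square_id n M \<and>
        (\<forall>i<n. \<forall>i'<n. i \<noteq> i' \<longrightarrow>
            cycle_edges (map (perm_act n (M i)) H) \<inter> cycle_edges (map (perm_act n (M i')) H) = {}) \<and>
        (\<Union>i<n. cycle_edges (map (perm_act n (M i)) H)) = qedges n)"

definition has_source_cycle :: "nat \<Rightarrow> bool" where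
  "has_source_cycle n \<longleftrightarrow> (\<exists>H. source_cycle n H)"

end

theory Submission
  imports Defs "HOL-Library.Disjoint_Sets"
begin

text \<open>
  Concatenation identifies Q_4n with the Cartesian square of Q_2n. Let H be a source cycle of
  length N with Latin square M, and \<sigma>_i the coordinate permutation given by row i of M.
  On the torus Z/N \<times> Z/N, the walk that steps in the second coordinate exactly on the
  antidiagonal a + b = 0 and in the first coordinate elsewhere is a Hamilton cycle, and its mirror
  image uses precisely the remaining edges of the torus. Lifting the walk along
  (a, b) \<mapsto> H!a @ H!b gives a Hamilton cycle K of Q_4n. In the doubled Latin square
  [[M, M + n], [M + n, M]], row i < n applies \<sigma>_i to both halves of each string and row n + i
  moreover swaps the halves; so the images of K are the walk and its mirror image lifted along
  \<sigma>_i(H) \<times> \<sigma>_i(H), which together partition the square of the cycle \<sigma>_i(H). Since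
  the cycles \<sigma>_i(H) partition Q_2n, the 2n images of K partition Q_4n.
\<close>

section \<open>Two complementary Hamilton cycles of the torus\<close>

definition torus :: "nat \<Rightarrow> (nat \<times> nat) set" where
  "torus N = {0..<N} \<times> {0..<N}"

(* Between them they use every
   edge of the torus exactly once. *)
definition torus_succ :: "nat \<Rightarrow> nat \<times> nat \<Rightarrow> nat \<times> nat" where
  "torus_succ N = (\<lambda>(a, b). if (a + b) mod N = 0 then (a, Suc b mod N) else (Suc a mod N, b))"

definition torus_succ_dual :: "nat \<Rightarrow> nat \<times> nat \<Rightarrow> nat \<times> nat" where
  "torus_succ_dual N = (\<lambda>(a, b). if (a + b) mod N = 0 then (Suc a mod N, b) else (a, Suc b mod N))"

definition torus_steps :: "nat \<Rightarrow> nat \<times> nat \<Rightarrow> (nat \<times> nat) set" where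
  "torus_steps N = (\<lambda>(a, b). {(Suc a mod N, b), (a, Suc b mod N)})"

lemma torus_steps_eq: "torus_steps N p = {torus_succ N p, torus_succ_dual N p}"
  by (auto simp: torus_succ_def torus_succ_dual_def torus_steps_def split: prod.splits)

lemma torus_succ_in_torus: "p \<in> torus N \<Longrightarrow> torus_succ N p \<in> torus N"
  and torus_succ_dual_in_torus: "p \<in> torus N \<Longrightarrow> torus_succ_dual N p \<in> torus N"
  by (auto simp: torus_succ_def torus_succ_dual_def torus_def split: prod.splits)

lemma torus_succ_dual_swap: "torus_succ_dual N (prod.swap p) = prod.swap (torus_succ N p)"
  by (simp add: torus_succ_def torus_succ_dual_def add.commute split: prod.splits)

lemma torus_succ_neq_dual:
  "2 \<le> N \<Longrightarrow> p \<in> torus N \<Longrightarrow> torus_succ N p \<noteq> torus_succ_dual N p"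
  by (auto simp: torus_succ_def torus_succ_dual_def torus_def mod_Suc split: prod.splits if_splits)

lemma torus_two_steps_neq:
  assumes "3 \<le> N" "p \<in> torus N" "q \<in> torus_steps N p" "r \<in> torus_steps N q"
  shows "r \<noteq> p"
  using assms by (auto simp: torus_steps_def torus_def mod_Suc split: if_splits)

lemma torus_succ_edge_neq_dual_edge:
  assumes "3 \<le> N" "p \<in> torus N" "q \<in> torus N"
  shows "{p, torus_succ N p} \<noteq> {q, torus_succ_dual N q}"
proof
  assume "{p, torus_succ N p} = {q, torus_succ_dual N q}"
  then consider "p = q" "torus_succ N p = torus_succ_dual N q"
    | "p = torus_succ_dual N q" "torus_succ N p = q"
    by (auto simp: doubleton_eq_iff)
  then show False
  proof cases
    case 1
    then show False using torus_succ_neq_dual assms by simp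
  next
    case 2
    then show False
      using torus_two_steps_neq[OF assms(1,3), of "torus_succ_dual N q"]
      by (simp add: torus_steps_eq)
  qed
qed

lemma div_round_up:
  assumes "0 < (N::nat)"
  shows "(t + N - 1) div N = t div N + (if t mod N = 0 then 0 else 1)"
proof -
  have "t + N - 1 = (t mod N + (N - 1)) + t div N * N"
    using assms by (simp add: mod_div_decomp)
  then have "(t + N - 1) div N = (t mod N + (N - 1)) div N + t div N"
    using assms by (simp only: div_mult_self1 [of N] neq0_conv)
  moreover have "(t mod N + (N - 1)) div N = (if t mod N = 0 then 0 else 1)"
    using assms mod_less_divisor[OF assms, of t] by (auto intro: div_nat_eqI)
  ultimately show ?thesis by simp
qed

lemma Suc_mod_inj: "q < N \<Longrightarrow> q' < N \<Longrightarrow> Suc q mod N = Suc q' mod N \<Longrightarrow> q = q'"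
  by (auto simp: mod_Suc split: if_splits)

(* The t-th vertex of the torus_succ walk from (0, 0): it lies on the antidiagonal t mod N, and
   its second coordinate is the rounded-up quotient of t by N, taken mod N. *)
definition torus_vertex :: "nat \<Rightarrow> nat \<Rightarrow> nat \<times> nat" where
  "torus_vertex N t = (let b = (t + N - 1) div N mod N in ((t + (N - b)) mod N, b))"

definition torus_cycle :: "nat \<Rightarrow> (nat \<times> nat) list" where
  "torus_cycle N = map (torus_vertex N) [0..<N * N]"

lemma torus_vertex_antidiagonal:
  assumes "0 < N"
  shows "(fst (torus_vertex N t) + snd (torus_vertex N t)) mod N = t mod N"
proof -
  define b where "b = (t + N - 1) div N mod N"
  have "b < N" using assms by (simp add: b_def)
  then have "((t + (N - b)) mod N + b) mod N = (t + N) mod N"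
    by (simp add: mod_add_left_eq)
  then show ?thesis by (simp add: torus_vertex_def Let_def b_def)
qed

lemma torus_vertex_Suc:
  assumes "0 < N"
  shows "torus_vertex N (Suc t) = torus_succ N (torus_vertex N t)"
proof -
  define b where "b = (t + N - 1) div N mod N"
  have bN: "b < N" using assms by (simp add: b_def)
  have v: "torus_vertex N t = ((t + (N - b)) mod N, b)"
    by (simp add: torus_vertex_def Let_def b_def)
  have s: "((t + (N - b)) mod N + b) mod N = t mod N"
    using torus_vertex_antidiagonal[OF assms, of t] by (simp add: v)
  have up: "(Suc t + N - 1) div N = Suc (t div N)"
    using assms by (simp add: div_add_self2)
  show ?thesis
  proof (cases "t mod N = 0")
    case True
    then have "(Suc t + N - 1) div N mod N = Suc b mod N"
      using up div_round_up[OF assms, of t] by (simp add: b_def mod_Suc_eq)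
    moreover have "(Suc t + (N - Suc b mod N)) mod N = (t + (N - b)) mod N"
    proof (cases "Suc b = N")
      case True
      then have "Suc t + (N - Suc b mod N) = Suc t + N" and "t + (N - b) = Suc t"
        by simp_all
      then show ?thesis by (simp only: mod_add_self2)
    next
      case False
      then have "Suc t + (N - Suc b) = t + (N - b)" using bN by simp
      then show ?thesis using False bN by simp
    qed
    ultimately show ?thesis using True s v
      by (simp add: torus_vertex_def torus_succ_def Let_def)
  next
    case False
    then have "(Suc t + N - 1) div N mod N = b"
      using up div_round_up[OF assms, of t] by (simp add: b_def)
    then show ?thesis using False s v
      by (simp add: torus_vertex_def torus_succ_def Let_def mod_Suc_eq)
  qed
qed

lemma torus_vertex_0: "torus_vertex N 0 = (0, 0)"
  by (cases "N = 0") (simp_all add: torus_vertex_def)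

lemma torus_vertex_period:
  assumes "0 < N"
  shows "torus_vertex N (N * N) = (0, 0)"
proof -
  have "(N * N + N - 1) div N = N"
    using div_round_up[OF assms, of "N * N"] assms by simp
  then show ?thesis by (simp add: torus_vertex_def)
qed

lemma torus_vertex_in_torus: "0 < N \<Longrightarrow> torus_vertex N t \<in> torus N"
  by (simp add: torus_vertex_def torus_def Let_def)

lemma inj_on_torus_vertex: "inj_on (torus_vertex N) {0..<N * N}"
proof (rule inj_onI)
  fix t t' assume t: "t \<in> {0..<N * N}" and t': "t' \<in> {0..<N * N}"
    and eq: "torus_vertex N t = torus_vertex N t'"
  then have N: "0 < N" by (cases "N = 0") auto
  have mod_eq: "t mod N = t' mod N"
    using torus_vertex_antidiagonal[OF N, of t] torus_vertex_antidiagonal[OF N, of t'] eq by simp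
  have "(t + N - 1) div N mod N = (t' + N - 1) div N mod N"
    using eq by (simp add: torus_vertex_def Let_def)
  moreover have "t div N < N" "t' div N < N"
    using t t' by (simp_all add: less_mult_imp_div_less)
  ultimately have "t div N = t' div N"
    using mod_eq div_round_up[OF N, of t] div_round_up[OF N, of t']
    by (auto split: if_splits dest: Suc_mod_inj)
  with mod_eq show "t = t'" by (metis div_mult_mod_eq)
qed

lemma length_torus_cycle: "length (torus_cycle N) = N * N"
  by (simp add: torus_cycle_def)

lemma distinct_torus_cycle: "distinct (torus_cycle N)"
  by (simp add: torus_cycle_def distinct_map inj_on_torus_vertex)

lemma set_torus_cycle: "set (torus_cycle N) = torus N"
proof (cases "N = 0")
  case False
  have "set (torus_cycle N) \<subseteq> torus N"
    using False by (auto simp: torus_cycle_def torus_vertex_in_torus)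
  moreover have "card (set (torus_cycle N)) = card (torus N)"
    using distinct_card[OF distinct_torus_cycle] by (simp add: length_torus_cycle torus_def)
  ultimately show ?thesis by (simp add: card_subset_eq torus_def)
qed (simp add: torus_cycle_def torus_def)

lemma torus_cycle_0: "0 < N \<Longrightarrow> torus_cycle N ! 0 = (0, 0)"
  by (simp add: torus_cycle_def torus_vertex_0)

lemma torus_cycle_Suc:
  assumes "i < N * N"
  shows "torus_cycle N ! (Suc i mod (N * N)) = torus_succ N (torus_cycle N ! i)"
proof -
  have N: "0 < N" using assms by (cases "N = 0") auto
  have "torus_vertex N (Suc i mod (N * N)) = torus_vertex N (Suc i)"
    using assms torus_vertex_period[OF N] by (cases "Suc i = N * N") (simp_all add: torus_vertex_0)
  then show ?thesis
    using assms N by (simp add: torus_cycle_def torus_vertex_Suc)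
qed

lemma cycle_edges_conv: "cycle_edges L = (\<lambda>i. {L ! i, L ! (Suc i mod length L)}) ` {0..<length L}"
  by (auto simp: cycle_edges_def)

lemma cycle_edges_map:
  "cycle_edges (map F L) = (\<lambda>i. {F (L ! i), F (L ! (Suc i mod length L))}) ` {0..<length L}"
proof -
  have "map F L ! (Suc i mod length L) = F (L ! (Suc i mod length L))" if "i < length L" for i
    using that by (intro nth_map mod_less_divisor) linarith
  then show ?thesis by (auto simp: cycle_edges_conv)
qed

lemma cycle_edges_map_torus_cycle:
  "cycle_edges (map F (torus_cycle N)) = (\<lambda>p. {F p, F (torus_succ N p)}) ` torus N"
proof -
  have "cycle_edges (map F (torus_cycle N))
      = (\<lambda>p. {F p, F (torus_succ N p)}) ` (!) (torus_cycle N) ` {0..<N * N}"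
    unfolding cycle_edges_map image_image length_torus_cycle
    by (intro image_cong) (simp_all add: torus_cycle_Suc)
  also have "(!) (torus_cycle N) ` {0..<N * N} = torus N"
    by (simp add: nth_image length_torus_cycle set_torus_cycle)
  finally show ?thesis .
qed

section \<open>The Cartesian square of the quaternary string graph\<close>

lemma length_qvert: "q \<in> qvert n \<Longrightarrow> length q = n"
  by (simp add: qvert_def)

lemma finite_qvert: "finite (qvert n)"
proof -
  have "qvert n \<subseteq> {xs. set xs \<subseteq> {0..<4} \<and> length xs = n}"
    by (auto simp: qvert_def in_set_conv_nth)
  then show ?thesis
    by (rule finite_subset) (simp add: finite_lists_length_eq)
qed

lemma three_le_card_qvert:
  assumes "0 < n"
  shows "3 \<le> card (qvert n)"
proof -
  obtain m where m: "n = Suc m" using assms by (cases n) auto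
  let ?v = "\<lambda>c::nat. c # replicate m 0"
  have "?v ` {0, 1, 2} \<subseteq> qvert n" using m by (auto simp: qvert_def nth_Cons split: nat.splits)
  moreover have "card (?v ` {0, 1, 2}) = 3" by simp
  ultimately show ?thesis using finite_qvert by (metis card_mono)
qed

lemma all_less_double_iff:
  fixes n :: nat
  shows "(\<forall>k<2 * n. P k) \<longleftrightarrow> (\<forall>k<n. P k) \<and> (\<forall>k<n. P (n + k))"
  by (metis add_less_cancel_left le_add_diff_inverse mult_2 not_less trans_less_add1)

lemma qvert_append:
  assumes "length x = n" "length y = n"
  shows "x @ y \<in> qvert (2 * n) \<longleftrightarrow> x \<in> qvert n \<and> y \<in> qvert n"
  using assms by (simp add: qvert_def all_less_double_iff nth_append)

lemma qvert_double_cases: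
  assumes "v \<in> qvert (2 * n)"
  obtains x y where "v = x @ y" "x \<in> qvert n" "y \<in> qvert n"
proof -
  have "length v = 2 * n" using assms by (simp add: qvert_def)
  then have "length (take n v) = n" "length (drop n v) = n" by auto
  then show ?thesis
    using that[of "take n v" "drop n v"] assms qvert_append by (metis append_take_drop_id)
qed

lemma qadj_sym:
  assumes "qadj n u v"
  shows "qadj n v u"
proof -
  have "{k. k < n \<and> v ! k \<noteq> u ! k} = {k. k < n \<and> u ! k \<noteq> v ! k}" by auto
  with assms show ?thesis unfolding qadj_def by metis
qed

lemma qadj_imp_neq: "qadj n u v \<Longrightarrow> u \<noteq> v"
  unfolding qadj_def by auto

lemma doubleton_in_qedges_iff: "{u, v} \<in> qedges n \<longleftrightarrow> qadj n u v"
  by (auto simp: qedges_def doubleton_eq_iff intro: qadj_sym)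

lemma qedges_doubletons: "\<forall>d\<in>qedges n. \<exists>u v. d = {u, v}"
  by (auto simp: qedges_def)

definition differing_positions :: "nat \<Rightarrow> nat list \<Rightarrow> nat list \<Rightarrow> nat set" where
  "differing_positions n u v = {k. k < n \<and> u ! k \<noteq> v ! k}"

definition cyclic_unit_steps :: "nat \<Rightarrow> nat list \<Rightarrow> nat list \<Rightarrow> bool" where
  "cyclic_unit_steps n u v \<longleftrightarrow>
     (\<forall>k<n. u ! k \<noteq> v ! k \<longrightarrow> ((u ! k + 1) mod 4 = v ! k \<or> (v ! k + 1) mod 4 = u ! k))"

lemma qadj_iff:
  "qadj n u v \<longleftrightarrow> u \<in> qvert n \<and> v \<in> qvert n \<and>
     card (differing_positions n u v) = 1 \<and> cyclic_unit_steps n u v"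
  unfolding qadj_def differing_positions_def cyclic_unit_steps_def by simp

lemma differing_positions_empty_iff:
  "length u = n \<Longrightarrow> length v = n \<Longrightarrow> differing_positions n u v = {} \<longleftrightarrow> u = v"
  unfolding differing_positions_def by (auto intro: nth_equalityI)

lemma card_differing_positions_append:
  assumes "length x = n" "length y = n" "length x' = n" "length y' = n"
  shows "card (differing_positions (2 * n) (x @ y) (x' @ y'))
       = card (differing_positions n x x') + card (differing_positions n y y')"
proof -
  have "differing_positions (2 * n) (x @ y) (x' @ y')
      = differing_positions n x x' \<union> (+) n ` differing_positions n y y'"
  proof (rule set_eqI)
    fix k
    show "k \<in> differing_positions (2 * n) (x @ y) (x' @ y')
      \<longleftrightarrow> k \<in> differing_positions n x x' \<union> (+) n ` differing_positions n y y'"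
      using assms by (cases "k < n")
        (auto simp: differing_positions_def nth_append image_iff intro: exI[of _ "k - n"])
  qed
  moreover have "differing_positions n x x' \<inter> (+) n ` differing_positions n y y' = {}"
    by (auto simp: differing_positions_def)
  ultimately show ?thesis
    by (simp add: card_Un_disjoint card_image differing_positions_def)
qed

lemma cyclic_unit_steps_append:
  assumes "length x = n" "length y = n" "length x' = n" "length y' = n"
  shows "cyclic_unit_steps (2 * n) (x @ y) (x' @ y')
     \<longleftrightarrow> cyclic_unit_steps n x x' \<and> cyclic_unit_steps n y y'"
  using assms by (simp add: cyclic_unit_steps_def all_less_double_iff nth_append)

lemma qadj_append:
  assumes "length x = n" "length y = n" "length x' = n" "length y' = n"
  shows "qadj (2 * n) (x @ y) (x' @ y') \<longleftrightarrow>
    (qadj n x x' \<and> y = y' \<and> y \<in> qvert n) \<or> (x = x' \<and> x \<in> qvert n \<and> qadj n y y')"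
proof -
  have "finite (differing_positions n x x')" "finite (differing_positions n y y')"
    by (auto simp: differing_positions_def)
  then have "card (differing_positions n x x') = 0 \<longleftrightarrow> x = x'"
    "card (differing_positions n y y') = 0 \<longleftrightarrow> y = y'"
    using differing_positions_empty_iff assms by simp_all
  then have "card (differing_positions n x x') + card (differing_positions n y y') = 1 \<longleftrightarrow>
      (card (differing_positions n x x') = 1 \<and> y = y') \<or>
      (x = x' \<and> card (differing_positions n y y') = 1)"
    by arith
  moreover have "cyclic_unit_steps n u u" for u by (simp add: cyclic_unit_steps_def)
  ultimately show ?thesis
    unfolding qadj_iff card_differing_positions_append[OF assms] cyclic_unit_steps_append[OF assms]
      qvert_append[OF assms(1,2)] qvert_append[OF assms(3,4)]
    by blast
qed

(* Reading x @ y as the pair (x, y): every edge of S is copied into every row (x \<mapsto> x @ y)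
   and into every column (x \<mapsto> y @ x). *)
definition cartesian_square_edges :: "nat \<Rightarrow> nat list set set \<Rightarrow> nat list set set" where
  "cartesian_square_edges n S = (\<Union>e\<in>S. \<Union>y\<in>qvert n. {(\<lambda>x. x @ y) ` e, (@) y ` e})"

lemma cartesian_square_edges_UN:
  "cartesian_square_edges n (\<Union>i\<in>I. S i) = (\<Union>i\<in>I. cartesian_square_edges n (S i))"
  by (simp add: cartesian_square_edges_def)

lemma cartesian_square_edges_mono:
  "S \<subseteq> S' \<Longrightarrow> cartesian_square_edges n S \<subseteq> cartesian_square_edges n S'"
  unfolding cartesian_square_edges_def by blast

lemma cartesian_square_edges_horizontalI:
  "{x, x'} \<in> S \<Longrightarrow> y \<in> qvert n \<Longrightarrow> {x @ y, x' @ y} \<in> cartesian_square_edges n S"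
  unfolding cartesian_square_edges_def by (intro UN_I[of "{x, x'}"] UN_I[of y]) auto

lemma cartesian_square_edges_verticalI:
  "x \<in> qvert n \<Longrightarrow> {y, y'} \<in> S \<Longrightarrow> {x @ y, x @ y'} \<in> cartesian_square_edges n S"
  unfolding cartesian_square_edges_def by (intro UN_I[of "{y, y'}"] UN_I[of x]) auto

lemma cartesian_square_edgesE:
  assumes "e \<in> cartesian_square_edges n S" "\<forall>d\<in>S. \<exists>u v. d = {u, v}"
  obtains (horizontal) x x' y where "e = {x @ y, x' @ y}" "{x, x'} \<in> S" "y \<in> qvert n"
    | (vertical) x y y' where "e = {x @ y, x @ y'}" "x \<in> qvert n" "{y, y'} \<in> S"
proof -
  obtain d y where d: "d \<in> S" "y \<in> qvert n" and "e = (\<lambda>x. x @ y) ` d \<or> e = (@) y ` d"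
    using assms(1) by (auto simp: cartesian_square_edges_def)
  moreover obtain u v where "d = {u, v}" using d assms(2) by blast
  ultimately show ?thesis using that by auto
qed

lemma qedges_double: "qedges (2 * n) = cartesian_square_edges n (qedges n)"
proof (intro set_eqI iffI)
  fix e assume "e \<in> qedges (2 * n)"
  then obtain u v where e: "e = {u, v}" and uv: "qadj (2 * n) u v"
    by (auto simp: qedges_def)
  then have "u \<in> qvert (2 * n)" "v \<in> qvert (2 * n)" by (simp_all add: qadj_def)
  then obtain x y x' y' where "u = x @ y" "v = x' @ y'"
    and "x \<in> qvert n" "y \<in> qvert n" "x' \<in> qvert n" "y' \<in> qvert n"
    by (metis qvert_double_cases)
  moreover from this uv have "(qadj n x x' \<and> y = y') \<or> (x = x' \<and> qadj n y y')"
    by (simp add: qadj_append qvert_def)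
  ultimately show "e \<in> cartesian_square_edges n (qedges n)"
    unfolding e
    by (auto simp: doubleton_in_qedges_iff [symmetric]
        intro: cartesian_square_edges_horizontalI cartesian_square_edges_verticalI)
next
  fix e assume "e \<in> cartesian_square_edges n (qedges n)"
  then show "e \<in> qedges (2 * n)"
  proof (rule cartesian_square_edgesE[OF _ qedges_doubletons])
    fix x x' y assume e: "e = {x @ y, x' @ y}" and xx': "{x, x'} \<in> qedges n" and "y \<in> qvert n"
    then have "length x = n" "length x' = n" "length y = n"
      by (auto simp: doubleton_in_qedges_iff qadj_def qvert_def)
    with e xx' \<open>y \<in> qvert n\<close> show ?thesis by (simp add: doubleton_in_qedges_iff qadj_append)
  next
    fix x y y' assume e: "e = {x @ y, x @ y'}" and "x \<in> qvert n" and yy': "{y, y'} \<in> qedges n"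
    then have "length x = n" "length y = n" "length y' = n"
      by (auto simp: doubleton_in_qedges_iff qadj_def qvert_def)
    with e yy' \<open>x \<in> qvert n\<close> show ?thesis by (simp add: doubleton_in_qedges_iff qadj_append)
  qed
qed

(* The edge of S of which an edge of the square is a copy: the copies in a row are the edges with a
   single second half. *)
definition factor_edge :: "nat \<Rightarrow> nat list set \<Rightarrow> nat list set" where
  "factor_edge n e = (if card (drop n ` e) = 1 then take n ` e else drop n ` e)"

lemma factor_edge_in:
  assumes "e \<in> cartesian_square_edges n S" "S \<subseteq> qedges n"
  shows "factor_edge n e \<in> S"
proof -
  have edge: "x \<noteq> x' \<and> length x = n \<and> length x' = n" if "{x, x'} \<in> S" for x x'
  proof -
    have adj: "qadj n x x'" using that assms(2) doubleton_in_qedges_iff by blast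
    then show ?thesis using qadj_imp_neq[OF adj] by (simp add: qadj_def length_qvert)
  qed
  from assms(1) show ?thesis
  proof (rule cartesian_square_edgesE)
    show "\<forall>d\<in>S. \<exists>u v. d = {u, v}" using assms(2) qedges_doubletons by blast
  next
    fix x x' y assume "e = {x @ y, x' @ y}" "{x, x'} \<in> S" "y \<in> qvert n"
    then show ?thesis using edge by (simp add: factor_edge_def)
  next
    fix x y y' assume "e = {x @ y, x @ y'}" "x \<in> qvert n" "{y, y'} \<in> S"
    then show ?thesis using edge by (simp add: factor_edge_def length_qvert)
  qed
qed

lemma cartesian_square_edges_disjoint:
  assumes "S \<subseteq> qedges n" "S' \<subseteq> qedges n" "S \<inter> S' = {}"
  shows "cartesian_square_edges n S \<inter> cartesian_square_edges n S' = {}"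
  using factor_edge_in[OF _ assms(1)] factor_edge_in[OF _ assms(2)] assms(3) by blast

lemma disjoint_family_on_cartesian_square:
  assumes "disjoint_family_on E I" "\<And>i. i \<in> I \<Longrightarrow> E i \<subseteq> qedges n"
  shows "disjoint_family_on (\<lambda>i. cartesian_square_edges n (E i)) I"
  using assms cartesian_square_edges_disjoint by (simp add: disjoint_family_on_def)

section \<open>Permuting coordinates\<close>

lemma length_perm_act [simp]: "length (perm_act n \<sigma> q) = n"
  by (simp add: perm_act_def)

lemma perm_act_nth_image:
  assumes "bij_betw \<sigma> {0..<n} {0..<n}" "j < n"
  shows "perm_act n \<sigma> q ! \<sigma> j = q ! j"
proof -
  have "\<sigma> j < n" using assms bij_betw_apply by fastforce
  moreover have "inv_into {0..<n} \<sigma> (\<sigma> j) = j"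
    using assms by (simp add: bij_betw_def)
  ultimately show ?thesis by (simp add: perm_act_def)
qed

lemma perm_act_eq_iff:
  assumes \<sigma>: "bij_betw \<sigma> {0..<n} {0..<n}" and r: "length r = n"
  shows "perm_act n \<sigma> q = r \<longleftrightarrow> (\<forall>j<n. r ! \<sigma> j = q ! j)"
proof
  assume "\<forall>j<n. r ! \<sigma> j = q ! j"
  show "perm_act n \<sigma> q = r"
  proof (rule nth_equalityI)
    fix k assume "k < length (perm_act n \<sigma> q)"
    then have "k \<in> \<sigma> ` {0..<n}" using \<sigma> by (simp add: bij_betw_def)
    then obtain j where "j < n" "k = \<sigma> j" by auto
    then show "perm_act n \<sigma> q ! k = r ! k"
      using \<open>\<forall>j<n. r ! \<sigma> j = q ! j\<close> perm_act_nth_image[OF \<sigma>] by simp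
  qed (simp add: r)
qed (use perm_act_nth_image[OF \<sigma>] in auto)

lemma perm_act_in_qvert:
  assumes \<sigma>: "bij_betw \<sigma> {0..<n} {0..<n}" and q: "q \<in> qvert n"
  shows "perm_act n \<sigma> q \<in> qvert n"
proof -
  have "perm_act n \<sigma> q ! k < 4" if "k < n" for k
  proof -
    have "k \<in> \<sigma> ` {0..<n}" using \<sigma> \<open>k < n\<close> by (simp add: bij_betw_def)
    then obtain j where "j < n" "k = \<sigma> j" by auto
    then show ?thesis using q perm_act_nth_image[OF \<sigma>] by (simp add: qvert_def)
  qed
  then show ?thesis by (simp add: qvert_def)
qed

lemma inj_on_perm_act:
  assumes \<sigma>: "bij_betw \<sigma> {0..<n} {0..<n}"
  shows "inj_on (perm_act n \<sigma>) (qvert n)"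
proof (rule inj_onI)
  fix q q' assume q: "q \<in> qvert n" and q': "q' \<in> qvert n"
    and eq: "perm_act n \<sigma> q = perm_act n \<sigma> q'"
  show "q = q'"
  proof (rule nth_equalityI)
    show "length q = length q'" using q q' by (simp add: qvert_def)
    fix j assume "j < length q"
    then have "j < n" using q by (simp add: qvert_def)
    then show "q ! j = q' ! j" using perm_act_nth_image[OF \<sigma>, of j] eq by metis
  qed
qed

lemma perm_act_image:
  assumes "bij_betw \<sigma> {0..<n} {0..<n}"
  shows "perm_act n \<sigma> ` qvert n = qvert n"
  using assms by (intro endo_inj_surj finite_qvert inj_on_perm_act) (auto intro: perm_act_in_qvert)

lemma set_map_perm_act:
  "bij_betw \<sigma> {0..<n} {0..<n} \<Longrightarrow> set H = qvert n \<Longrightarrow> set (map (perm_act n \<sigma>) H) = qvert n"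
  by (simp add: perm_act_image)

lemma distinct_map_perm_act:
  "bij_betw \<sigma> {0..<n} {0..<n} \<Longrightarrow> distinct H \<Longrightarrow> set H \<subseteq> qvert n
    \<Longrightarrow> distinct (map (perm_act n \<sigma>) H)"
  by (simp add: distinct_map inj_on_subset[OF inj_on_perm_act])

lemma bij_betw_block:
  fixes f :: "nat \<Rightarrow> nat"
  assumes f: "bij_betw f {0..<n} {0..<n}"
  shows "bij_betw (\<lambda>j. f (j mod n) + (if c = (j < n) then 0 else n)) {0..<2 * n} {0..<2 * n}"
proof -
  let ?g = "\<lambda>j. f (j mod n) + (if c = (j < n) then 0 else n)"
  have f_lt: "f (j mod n) < n" if "j < 2 * n" for j
    using f that bij_betw_apply by fastforce
  have "inj_on ?g {0..<2 * n}"
  proof (rule inj_onI)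
    fix j j' assume j: "j \<in> {0..<2 * n}" and j': "j' \<in> {0..<2 * n}" and eq: "?g j = ?g j'"
    then have "(j < n) = (j' < n)" and "f (j mod n) = f (j' mod n)"
      using f_lt[of j] f_lt[of j'] by (auto split: if_splits)
    moreover have "j mod n < n" "j' mod n < n" using j by auto
    ultimately have "(j < n) = (j' < n)" "j mod n = j' mod n"
      using f by (auto simp: bij_betw_def dest: inj_onD)
    then show "j = j'" using j j' by (auto simp: mod_if split: if_splits)
  qed
  moreover have "?g ` {0..<2 * n} \<subseteq> {0..<2 * n}"
    using f_lt by (force split: if_splits)
  ultimately show ?thesis
    by (simp add: bij_betw_def endo_inj_surj)
qed

lemma perm_act_block_append:
  fixes f :: "nat \<Rightarrow> nat"
  assumes f: "bij_betw f {0..<n} {0..<n}" and "length x = n" "length y = n"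
  shows "perm_act (2 * n) (\<lambda>j. f (j mod n) + (if c = (j < n) then 0 else n)) (x @ y)
       = (if c then perm_act n f x @ perm_act n f y else perm_act n f y @ perm_act n f x)"
proof -
  have f_lt: "f j < n" if "j < n" for j using f that bij_betw_apply by fastforce
  have "(if c then perm_act n f x @ perm_act n f y else perm_act n f y @ perm_act n f x)
          ! (f (j mod n) + (if c = (j < n) then 0 else n)) = (x @ y) ! j" if "j < 2 * n" for j
  proof (cases "j < n")
    case True
    then show ?thesis
      using assms f_lt[OF True] by (cases c) (simp_all add: nth_append perm_act_nth_image[OF f])
  next
    case False
    then have "j mod n = j - n" "j - n < n" using that by (simp_all add: mod_if)
    then show ?thesis
      using assms False f_lt[of "j - n"]
      by (cases c) (simp_all add: nth_append perm_act_nth_image[OF f])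
  qed
  then show ?thesis
    by (subst perm_act_eq_iff[OF bij_betw_block[OF f]]) (simp_all add: assms)
qed

(* The Latin square [[M, M + n], [M + n, M]]. *)
definition double_latin_square :: "nat \<Rightarrow> (nat \<Rightarrow> nat \<Rightarrow> nat) \<Rightarrow> nat \<Rightarrow> nat \<Rightarrow> nat" where
  "double_latin_square n M r j = M (r mod n) (j mod n) + (if (r < n) = (j < n) then 0 else n)"

lemma latin_square_id_double:
  assumes M: "latin_square_id n M" and "0 < n"
  shows "latin_square_id (2 * n) (double_latin_square n M)"
  unfolding latin_square_id_def
proof (intro conjI allI impI)
  fix r assume "r < 2 * n"
  have "bij_betw (\<lambda>j. M (r mod n) j) {0..<n} {0..<n}"
    using M \<open>0 < n\<close> by (simp add: latin_square_id_def)
  then show "bij_betw (\<lambda>j. double_latin_square n M r j) {0..<2 * n} {0..<2 * n}"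
    using bij_betw_block[of "\<lambda>j. M (r mod n) j" n "r < n"] by (simp add: double_latin_square_def)
next
  fix j assume "j < 2 * n"
  have "bij_betw (\<lambda>i. M i (j mod n)) {0..<n} {0..<n}"
    using M \<open>0 < n\<close> by (simp add: latin_square_id_def)
  moreover have "(\<lambda>r. double_latin_square n M r j)
      = (\<lambda>r. M (r mod n) (j mod n) + (if (j < n) = (r < n) then 0 else n))"
    by (auto simp: double_latin_square_def)
  ultimately show "bij_betw (\<lambda>r. double_latin_square n M r j) {0..<2 * n} {0..<2 * n}"
    using bij_betw_block[of "\<lambda>i. M i (j mod n)" n "j < n"] by simp
next
  fix j assume "j < 2 * n"
  then show "double_latin_square n M 0 j = j"
    using M \<open>0 < n\<close> by (auto simp: double_latin_square_def latin_square_id_def mod_if)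
qed

section \<open>Lifting a Hamilton cycle to the square\<close>

definition pair_vertex :: "nat list list \<Rightarrow> nat \<times> nat \<Rightarrow> nat list" where
  "pair_vertex L = (\<lambda>(a, b). L ! a @ L ! b)"

definition lifted_torus_edges ::
    "nat list list \<Rightarrow> (nat \<times> nat \<Rightarrow> nat \<times> nat) \<Rightarrow> nat list set set" where
  "lifted_torus_edges L T = (\<lambda>p. {pair_vertex L p, pair_vertex L (T p)}) ` torus (length L)"

lemma inj_on_pair_vertex:
  assumes "distinct L" "set L \<subseteq> qvert n"
  shows "inj_on (pair_vertex L) (torus (length L))"
proof (rule inj_onI)
  fix p q assume "p \<in> torus (length L)" "q \<in> torus (length L)"
    and "pair_vertex L p = pair_vertex L q"
  moreover have "length (L ! a) = n" if "a < length L" for a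
    using assms(2) nth_mem[OF that] by (auto simp: qvert_def)
  ultimately show "p = q"
    using assms(1) by (auto simp: pair_vertex_def torus_def nth_eq_iff_index_eq)
qed

lemma pair_vertex_image:
  assumes "set L = qvert n"
  shows "pair_vertex L ` torus (length L) = qvert (2 * n)"
proof
  have "L ! a @ L ! b \<in> qvert (2 * n)" if "a < length L" "b < length L" for a b
    using assms nth_mem[OF that(1)] nth_mem[OF that(2)] by (simp add: qvert_append length_qvert)
  then show "pair_vertex L ` torus (length L) \<subseteq> qvert (2 * n)"
    by (auto simp: pair_vertex_def torus_def)
next
  show "qvert (2 * n) \<subseteq> pair_vertex L ` torus (length L)"
  proof
    fix v assume "v \<in> qvert (2 * n)"
    then obtain x y where "v = x @ y" "x \<in> set L" "y \<in> set L"
      using assms by (metis qvert_double_cases)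
    then obtain a b where "a < length L" "b < length L" "v = pair_vertex L (a, b)"
      by (auto simp: pair_vertex_def in_set_conv_nth)
    then show "v \<in> pair_vertex L ` torus (length L)"
      by (auto simp: torus_def)
  qed
qed

lemma cartesian_square_cycle_edges:
  assumes "set L = qvert n"
  shows "cartesian_square_edges n (cycle_edges L)
       = (\<Union>p\<in>torus (length L). (\<lambda>q. {pair_vertex L p, pair_vertex L q}) ` torus_steps (length L) p)"
proof -
  let ?N = "length L" and ?v = "pair_vertex L"
  let ?h = "\<lambda>a b. {?v (a, b), ?v (Suc a mod ?N, b)}"
    and ?w = "\<lambda>a b. {?v (a, b), ?v (a, Suc b mod ?N)}"
  have "qvert n = (!) L ` {0..<?N}" using assms by (simp add: nth_image)
  then have "cartesian_square_edges n (cycle_edges L)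
      = (\<Union>a\<in>{0..<?N}. \<Union>b\<in>{0..<?N}. {?h a b, ?w b a})"
    by (simp add: cartesian_square_edges_def cycle_edges_conv pair_vertex_def insert_commute)
  also have "\<dots> = (\<Union>a\<in>{0..<?N}. \<Union>b\<in>{0..<?N}. {?h a b}) \<union> (\<Union>b\<in>{0..<?N}. \<Union>a\<in>{0..<?N}. {?w b a})"
    by blast
  also have "\<dots> = (\<Union>p\<in>torus ?N. (\<lambda>q. {?v p, ?v q}) ` torus_steps ?N p)"
    by (auto simp: torus_def torus_steps_def)
  finally show ?thesis .
qed

lemma cartesian_square_cycle_edges_decomposition:
  assumes "set L = qvert n"
  shows "cartesian_square_edges n (cycle_edges L)
       = lifted_torus_edges L (torus_succ (length L))
         \<union> lifted_torus_edges L (torus_succ_dual (length L))"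
  unfolding cartesian_square_cycle_edges[OF assms] lifted_torus_edges_def torus_steps_eq
  by auto

lemma lifted_torus_edges_disjoint:
  assumes "distinct L" "set L \<subseteq> qvert n" "3 \<le> length L"
  shows "lifted_torus_edges L (torus_succ (length L))
      \<inter> lifted_torus_edges L (torus_succ_dual (length L)) = {}"
proof -
  let ?N = "length L" and ?v = "pair_vertex L"
  have False if "p \<in> torus ?N" "q \<in> torus ?N"
    and eq: "{?v p, ?v (torus_succ ?N p)} = {?v q, ?v (torus_succ_dual ?N q)}" for p q
  proof -
    have "{p, torus_succ ?N p} \<subseteq> torus ?N" "{q, torus_succ_dual ?N q} \<subseteq> torus ?N"
      using that by (simp_all add: torus_succ_in_torus torus_succ_dual_in_torus)
    moreover have "?v ` {p, torus_succ ?N p} = ?v ` {q, torus_succ_dual ?N q}"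
      using eq by simp
    ultimately have "{p, torus_succ ?N p} = {q, torus_succ_dual ?N q}"
      using inj_on_image_eq_iff[OF inj_on_pair_vertex[OF assms(1,2)]] by metis
    then show False using torus_succ_edge_neq_dual_edge assms(3) that by blast
  qed
  then show ?thesis by (auto simp: lifted_torus_edges_def)
qed

lemma lifted_torus_edges_partition:
  assumes "distinct L" "set L = qvert n" "0 < n"
  shows "lifted_torus_edges L (torus_succ (length L))
      \<union> lifted_torus_edges L (torus_succ_dual (length L)) = cartesian_square_edges n (cycle_edges L)"
    and "lifted_torus_edges L (torus_succ (length L))
      \<inter> lifted_torus_edges L (torus_succ_dual (length L)) = {}"
  using cartesian_square_cycle_edges_decomposition[OF assms(2)]
    lifted_torus_edges_disjoint[OF assms(1) equalityD1[OF assms(2)]]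
    three_le_card_qvert[OF assms(3)] distinct_card[OF assms(1)] assms(2)
  by simp_all

lemma cycle_edges_subset_qedges: "dir_ham_cycle n H \<Longrightarrow> cycle_edges H \<subseteq> qedges n"
  by (auto simp: dir_ham_cycle_def cycle_edges_def doubleton_in_qedges_iff)

lemma dir_ham_cycle_product:
  assumes H: "dir_ham_cycle n H"
  shows "dir_ham_cycle (2 * n) (map (pair_vertex H) (torus_cycle (length H)))"
proof -
  let ?N = "length H" and ?K = "map (pair_vertex H) (torus_cycle (length H))"
  have set_H: "set H = qvert n" and "distinct H" "0 < ?N" and H0: "H ! 0 = qorigin n"
    using H by (auto simp: dir_ham_cycle_def)
  have "distinct ?K"
    using inj_on_pair_vertex[OF \<open>distinct H\<close>, of n] set_H
    by (simp add: distinct_map distinct_torus_cycle set_torus_cycle)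
  moreover have "set ?K = qvert (2 * n)"
    using pair_vertex_image[OF set_H] by (simp add: set_torus_cycle)
  moreover have "?K \<noteq> []"
    using \<open>0 < ?N\<close> by (simp add: torus_cycle_def)
  moreover have "?K ! 0 = qorigin (2 * n)"
    using \<open>0 < ?N\<close> H0
    by (simp add: torus_cycle_0 length_torus_cycle pair_vertex_def qorigin_def mult_2 replicate_add)
  moreover have "qadj (2 * n) (?K ! i) (?K ! (Suc i mod length ?K))" if "i < length ?K" for i
  proof -
    have "cycle_edges ?K = lifted_torus_edges H (torus_succ ?N)"
      by (simp add: cycle_edges_map_torus_cycle lifted_torus_edges_def)
    also have "\<dots> \<subseteq> cartesian_square_edges n (cycle_edges H)"
      using cartesian_square_cycle_edges_decomposition[OF set_H] by blast
    also have "\<dots> \<subseteq> cartesian_square_edges n (qedges n)"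
      by (rule cartesian_square_edges_mono[OF cycle_edges_subset_qedges[OF H]])
    finally have "cycle_edges ?K \<subseteq> qedges (2 * n)" by (simp add: qedges_double)
    moreover have "{?K ! i, ?K ! (Suc i mod length ?K)} \<in> cycle_edges ?K"
      using that unfolding cycle_edges_def by (intro CollectI exI[of _ i]) simp
    ultimately show ?thesis by (auto simp: doubleton_in_qedges_iff [symmetric])
  qed
  ultimately show ?thesis
    by (simp add: dir_ham_cycle_def)
qed

lemma perm_act_double_pair_vertex:
  assumes M: "latin_square_id n M" and "r < 2 * n" "set H \<subseteq> qvert n" "p \<in> torus (length H)"
  shows "perm_act (2 * n) (double_latin_square n M r) (pair_vertex H p)
       = pair_vertex (map (perm_act n (M (r mod n))) H) (if r < n then p else prod.swap p)"
proof -
  obtain a b where p: "p = (a, b)" "a < length H" "b < length H"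
    using assms(4) by (auto simp: torus_def)
  have "length (H ! a) = n" "length (H ! b) = n"
    using assms(3) nth_mem[OF p(2)] nth_mem[OF p(3)] by (auto simp: length_qvert)
  moreover have "bij_betw (M (r mod n)) {0..<n} {0..<n}"
    using M \<open>r < 2 * n\<close> by (simp add: latin_square_id_def)
  moreover have "double_latin_square n M r
      = (\<lambda>j. M (r mod n) (j mod n) + (if (r < n) = (j < n) then 0 else n))"
    by (simp add: double_latin_square_def fun_eq_iff)
  ultimately show ?thesis
    using p by (simp add: perm_act_block_append pair_vertex_def)
qed

lemma lifted_torus_edges_swap:
  "(\<lambda>p. {F (prod.swap p), F (prod.swap (torus_succ N p))}) ` torus N
     = (\<lambda>q. {F q, F (torus_succ_dual N q)}) ` torus N"
proof -
  have "(\<lambda>p. {F (prod.swap p), F (prod.swap (torus_succ N p))}) ` torus N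
      = (\<lambda>q. {F q, F (torus_succ_dual N q)}) ` prod.swap ` torus N"
    by (simp add: image_image torus_succ_dual_swap)
  also have "prod.swap ` torus N = torus N" by (simp add: torus_def product_swap)
  finally show ?thesis .
qed

lemma cycle_edges_double_product:
  assumes "latin_square_id n M" "r < 2 * n" "set H \<subseteq> qvert n"
  shows "cycle_edges (map (perm_act (2 * n) (double_latin_square n M r))
            (map (pair_vertex H) (torus_cycle (length H))))
       = lifted_torus_edges (map (perm_act n (M (r mod n))) H)
           (if r < n then torus_succ (length H) else torus_succ_dual (length H))"
proof -
  let ?N = "length H" and ?L = "map (perm_act n (M (r mod n))) H"
  let ?F = "perm_act (2 * n) (double_latin_square n M r) \<circ> pair_vertex H"
  have "cycle_edges (map ?F (torus_cycle ?N)) = (\<lambda>p. {?F p, ?F (torus_succ ?N p)}) ` torus ?N"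
    by (rule cycle_edges_map_torus_cycle)
  also have "\<dots> = (\<lambda>p. {pair_vertex ?L (if r < n then p else prod.swap p),
      pair_vertex ?L (if r < n then torus_succ ?N p else prod.swap (torus_succ ?N p))}) ` torus ?N"
    by (intro image_cong) (simp_all add: perm_act_double_pair_vertex[OF assms] torus_succ_in_torus)
  also have "\<dots> = lifted_torus_edges ?L (if r < n then torus_succ ?N else torus_succ_dual ?N)"
    using lifted_torus_edges_swap[of "pair_vertex ?L" ?N] by (simp add: lifted_torus_edges_def)
  finally show ?thesis by simp
qed

section \<open>Doubling a source cycle\<close>

lemma UN_doubled_family:
  fixes n :: nat
  shows "(\<Union>r<2 * n. if r < n then A (r mod n) else B (r mod n)) = (\<Union>i<n. A i \<union> B i)"
proof (intro equalityI subsetI)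
  fix e assume "e \<in> (\<Union>r<2 * n. if r < n then A (r mod n) else B (r mod n))"
  then obtain r where "r < 2 * n" "e \<in> (if r < n then A (r mod n) else B (r mod n))" by blast
  moreover have "r mod n < n" using \<open>r < 2 * n\<close> by simp
  ultimately show "e \<in> (\<Union>i<n. A i \<union> B i)" by (auto split: if_splits)
next
  fix e assume "e \<in> (\<Union>i<n. A i \<union> B i)"
  then obtain i where "i < n" "e \<in> A i \<or> e \<in> B i" by blast
  then show "e \<in> (\<Union>r<2 * n. if r < n then A (r mod n) else B (r mod n))"
  proof (elim disjE)
    assume "e \<in> A i"
    then show ?thesis using \<open>i < n\<close> by (intro UN_I[of i]) auto
  next
    assume "e \<in> B i"
    then show ?thesis using \<open>i < n\<close> by (intro UN_I[of "n + i"]) auto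
  qed
qed

lemma disjoint_family_on_doubled:
  fixes n :: nat
  assumes "disjoint_family_on D {..<n}"
    and "\<And>i. i < n \<Longrightarrow> A i \<union> B i = D i" "\<And>i. i < n \<Longrightarrow> A i \<inter> B i = {}"
  shows "disjoint_family_on (\<lambda>r. if r < n then A (r mod n) else B (r mod n)) {..<2 * n}"
  unfolding disjoint_family_on_def
proof (intro ballI impI)
  fix r r' assume r: "r \<in> {..<2 * n}" "r' \<in> {..<2 * n}" "r \<noteq> r'"
  then have mod: "r mod n < n" "r' mod n < n" by auto
  show "(if r < n then A (r mod n) else B (r mod n))
      \<inter> (if r' < n then A (r' mod n) else B (r' mod n)) = {}"
  proof (cases "r mod n = r' mod n")
    case True
    have "x mod n = (if x < n then x else x - n)" if "x < 2 * n" for x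
      using that by (simp add: mod_if)
    with r True have "(r < n) \<noteq> (r' < n)" by (auto split: if_splits)
    then show ?thesis using assms(3)[OF mod(1)] True by auto
  next
    case False
    then have "D (r mod n) \<inter> D (r' mod n) = {}"
      using assms(1) mod by (auto simp: disjoint_family_on_def)
    moreover have "(if r < n then A (r mod n) else B (r mod n)) \<subseteq> D (r mod n)"
      "(if r' < n then A (r' mod n) else B (r' mod n)) \<subseteq> D (r' mod n)"
      using assms(2)[OF mod(1)] assms(2)[OF mod(2)] by auto
    ultimately show ?thesis by (metis Int_mono subset_empty)
  qed
qed

lemma source_cycle_double:
  assumes "0 < n" and "source_cycle n H"
  shows "source_cycle (2 * n) (map (pair_vertex H) (torus_cycle (length H)))"
proof -
  define L where "L M i = map (perm_act n (M i)) H" for M :: "nat \<Rightarrow> nat \<Rightarrow> nat" and i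
  obtain M where H: "dir_ham_cycle n H" and M: "latin_square_id n M"
    and disj: "disjoint_family_on (\<lambda>i. cycle_edges (L M i)) {..<n}"
    and cover: "(\<Union>i<n. cycle_edges (L M i)) = qedges n"
    using assms(2) by (auto simp: source_cycle_def disjoint_family_on_def L_def)
  let ?N = "length H" and ?K = "map (pair_vertex H) (torus_cycle (length H))"
  define A where "A i = lifted_torus_edges (L M i) (torus_succ ?N)" for i
  define B where "B i = lifted_torus_edges (L M i) (torus_succ_dual ?N)" for i
  define C where "C r = (if r < n then A (r mod n) else B (r mod n))" for r
  have set_H: "set H = qvert n" and "distinct H" using H by (auto simp: dir_ham_cycle_def)
  have AB: "A i \<union> B i = cartesian_square_edges n (cycle_edges (L M i))" "A i \<inter> B i = {}"
    if "i < n" for i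
  proof -
    have \<sigma>: "bij_betw (M i) {0..<n} {0..<n}" using M that by (simp add: latin_square_id_def)
    show "A i \<union> B i = cartesian_square_edges n (cycle_edges (L M i))" "A i \<inter> B i = {}"
      using lifted_torus_edges_partition[OF distinct_map_perm_act[OF \<sigma>] set_map_perm_act[OF \<sigma>]]
        \<open>distinct H\<close> set_H assms(1)
      by (simp_all add: A_def B_def L_def)
  qed
  have "(\<Union>r<2 * n. C r) = (\<Union>i<n. A i \<union> B i)"
    unfolding C_def by (rule UN_doubled_family)
  also have "\<dots> = cartesian_square_edges n (\<Union>i<n. cycle_edges (L M i))"
    using AB(1) by (simp add: cartesian_square_edges_UN)
  also have "\<dots> = qedges (2 * n)"
    using cover by (simp add: qedges_double)
  finally have "(\<Union>r<2 * n. C r) = qedges (2 * n)" .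
  moreover have "disjoint_family_on C {..<2 * n}"
  proof -
    have "disjoint_family_on (\<lambda>i. cartesian_square_edges n (cycle_edges (L M i))) {..<n}"
      using cover by (intro disjoint_family_on_cartesian_square[OF disj]) auto
    then show ?thesis
      unfolding C_def using AB by (rule disjoint_family_on_doubled)
  qed
  moreover have "cycle_edges (map (perm_act (2 * n) (double_latin_square n M r)) ?K) = C r"
    if "r < 2 * n" for r
    using cycle_edges_double_product[OF M that, of H] set_H by (simp add: A_def B_def C_def L_def)
  ultimately show ?thesis
    using dir_ham_cycle_product[OF H] latin_square_id_double[OF M assms(1)]
    unfolding source_cycle_def disjoint_family_on_def
    by (intro conjI exI[of _ "double_latin_square n M"]) simp_all
qed

theorem corollary3:
  fixes n :: nat
  assumes "n \<ge> 1"
    and "has_source_cycle n"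
  shows "has_source_cycle (2 * n)"
proof -
  obtain H where "source_cycle n H" using assms(2) by (auto simp: has_source_cycle_def)
  then have "source_cycle (2 * n) (map (pair_vertex H) (torus_cycle (length H)))"
    using source_cycle_double assms(1) by simp
  then show ?thesis by (auto simp: has_source_cycle_def)
qed

end
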